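(* Let $G$ be a nonempty $p$-regular multigraph and $W\sim\mathrm{Wig}$. Then $\mathbb{E}_W\, m^c_G(W)=0$.
   Context: $\mathrm{Wig}=\mathrm{Wig}(p,n,1)$ is the law of the symmetric tensor $W\in\mathrm{Sym}^p(\mathbb{R}^n)$ with $W_{i_1,\dots,i_p}=\frac{1}{\sqrt{p!}}\sum_{\pi\in S_p}G_{i_{\pi(1)},\dots,i_{\pi(p)}}$, $G$ having i.i.d. $\mathcal{N}(0,1)$ entries; for a multiset $S$ of $p$ elements of $[n]$, $T_S$ denotes the corresponding entry of a symmetric tensor $T$. Multigraphs $G=(V,E)$ may have loops and parallel edges (a loop contributes 2 to the degree); $p$-regular means all degrees equal $p$. For $i\in[n]^E$, $i(\partial v)$ is the multiset of labels of edges at $v$ (loop labels counted twice). A Frobenius pair is a connected component consisting of two vertices joined by $p$ parallel edges; let $U$ be the set of vertices lying in Frobenius pairs, and for such a pair $\pi$ let $i(\pi)$ be the multiset of its $p$ edge labels. With $b=|E|$, $$m^c_G(T)=\sum_{\substack{i\in[n]^E\\ i_1,\dots,i_b\text{ distinct}}}\Big[\prod_{v\in V\setminus U}T_{i(\partial v)}\prod_{\pi}\big(T_{i(\pi)}^2-1\big)\Big],$$ the second product over the Frobenius pairs $\pi$ of $G$. *)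

theory Defs
  imports "HOL-Probability.Probability" "HOL-Library.Multiset" "HOL-Combinatorics.Permutations"
begin

text \<open>Finite multigraph: vertex set V, edge set E, each edge e has a multiset
  of two endpoints ends e (a loop at v has ends e = {#v,v#}).\<close>
definition multigraph :: "'v set \<Rightarrow> 'e set \<Rightarrow> ('e \<Rightarrow> 'v multiset) \<Rightarrow> bool" where
  "multigraph V E ends \<longleftrightarrow> finite V \<and> finite E \<and>
     (\<forall>e\<in>E. size (ends e) = 2 \<and> set_mset (ends e) \<subseteq> V)"

text \<open>Degree; a loop contributes 2.\<close>
definition deg :: "'e set \<Rightarrow> ('e \<Rightarrow> 'v multiset) \<Rightarrow> 'v \<Rightarrow> nat" where
  "deg E ends v = (\<Sum>e\<in>E. count (ends e) v)"

definition regular :: "nat \<Rightarrow> 'v set \<Rightarrow> 'e set \<Rightarrow> ('e \<Rightarrow> 'v multiset) \<Rightarrow> bool" where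
  "regular p V E ends \<longleftrightarrow> (\<forall>v\<in>V. deg E ends v = p)"

text \<open>u and w form a Frobenius pair: a connected component consisting of the two
  distinct vertices u, w joined by p parallel edges (every edge at u or w joins u and w,
  and there are exactly p of them).\<close>
definition frob_pair :: "nat \<Rightarrow> 'v set \<Rightarrow> 'e set \<Rightarrow> ('e \<Rightarrow> 'v multiset) \<Rightarrow> 'v \<Rightarrow> 'v \<Rightarrow> bool" where
  "frob_pair p V E ends u w \<longleftrightarrow> u \<in> V \<and> w \<in> V \<and> u \<noteq> w \<and>
     (\<forall>e\<in>E. (u \<in># ends e \<or> w \<in># ends e) \<longrightarrow> ends e = {#u, w#}) \<and>
     card {e\<in>E. ends e = {#u, w#}} = p"

definition frob_pairs :: "nat \<Rightarrow> 'v set \<Rightarrow> 'e set \<Rightarrow> ('e \<Rightarrow> 'v multiset) \<Rightarrow> 'v set set" where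
  "frob_pairs p V E ends = {{u, w} | u w. frob_pair p V E ends u w}"

definition frob_vertices :: "nat \<Rightarrow> 'v set \<Rightarrow> 'e set \<Rightarrow> ('e \<Rightarrow> 'v multiset) \<Rightarrow> 'v set" where
  "frob_vertices p V E ends = \<Union> (frob_pairs p V E ends)"

text \<open>i(\<partial>v): multiset of labels of edges at v, loop labels counted twice.\<close>
definition labels_at :: "'e set \<Rightarrow> ('e \<Rightarrow> 'v multiset) \<Rightarrow> ('e \<Rightarrow> nat) \<Rightarrow> 'v \<Rightarrow> nat multiset" where
  "labels_at E ends i v = (\<Sum>e\<in>E. replicate_mset (count (ends e) v) (i e))"

definition labels_pair :: "'e set \<Rightarrow> ('e \<Rightarrow> 'v multiset) \<Rightarrow> ('e \<Rightarrow> nat) \<Rightarrow> 'v set \<Rightarrow> nat multiset" where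
  "labels_pair E ends i P = image_mset i (mset_set {e\<in>E. ends e = mset_set P})"

text \<open>Symmetric tensors in Sym^p(R^n) are represented by their entries T S, indexed by
  multisets S of elements of [n] = {0..<n} of size p.
  m^c_G(T): sum over injective labellings i : E \<rightarrow> [n].\<close>
definition mc :: "nat \<Rightarrow> nat \<Rightarrow> 'v set \<Rightarrow> 'e set \<Rightarrow> ('e \<Rightarrow> 'v multiset) \<Rightarrow> (nat multiset \<Rightarrow> real) \<Rightarrow> real" where
  "mc p n V E ends T =
     (\<Sum>i\<in>{i\<in>E \<rightarrow>\<^sub>E {0..<n}. inj_on i E}.
        (\<Prod>v\<in>V - frob_vertices p V E ends. T (labels_at E ends i v)) *
        (\<Prod>P\<in>frob_pairs p V E ends. (T (labels_pair E ends i P))\<^sup>2 - 1))"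

text \<open>Index set [n]^p of the Gaussian array G (index tuples as lists of length p).\<close>
definition gauss_idx :: "nat \<Rightarrow> nat \<Rightarrow> nat list set" where
  "gauss_idx p n = {xs. length xs = p \<and> set xs \<subseteq> {0..<n}}"

definition gauss_array :: "nat \<Rightarrow> nat \<Rightarrow> (nat list \<Rightarrow> real) measure" where
  "gauss_array p n = PiM (gauss_idx p n) (\<lambda>_. density lborel std_normal_density)"

definition wig :: "nat \<Rightarrow> (nat list \<Rightarrow> real) \<Rightarrow> nat multiset \<Rightarrow> real" where
  "wig p G S = (let xs = sorted_list_of_multiset S in
     (1 / sqrt (fact p)) * (\<Sum>\<sigma>\<in>{\<sigma>. \<sigma> permutes {..<p}}. G (map (\<lambda>k. xs ! \<sigma> k) [0..<p])))"

end

theory Submission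
  imports Defs
begin

text \<open>
  Expand \<open>m\<^sup>c\<^sub>G(W)\<close> over the injective edge labellings \<open>i\<close> and fix one of them.
  Two distinct vertices with the same label multiset \<open>i(\<partial>v)\<close> must share all their edges,
  hence form a Frobenius pair; so the multisets indexing the factors of the summand
  (\<open>i(\<partial>v)\<close> for \<open>v \<notin> U\<close> and \<open>i(\<pi>)\<close> for the Frobenius pairs \<open>\<pi>\<close>) are pairwise distinct.
  The entry \<open>W\<^sub>S\<close> only involves the Gaussians \<open>G\<^sub>t\<close> with \<open>mset t = S\<close>, so entries with distinct
  indices are independent and the expectation of the summand is the product of the
  expectations of its factors. These all vanish: \<open>\<bbbE> W\<^sub>S = 0\<close>, and \<open>\<bbbE> W\<^sub>S\<^sup>2 = 1\<close> when \<open>S\<close> has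
  distinct elements, as \<open>i(\<pi>)\<close> has by injectivity of \<open>i\<close>. Since \<open>V \<noteq> {}\<close> there is at least one factor.
\<close>

lemma prod_image_Un_image:
  assumes "finite A" "finite B" "inj_on h A" "inj_on k B" "h ` A \<inter> k ` B = {}"
  shows "(\<Prod>a\<in>A. f (h a)) * (\<Prod>b\<in>B. g (k b)) =
    (\<Prod>x\<in>h ` A \<union> k ` B. if x \<in> k ` B then g x else f x)"
proof -
  have "(\<Prod>a\<in>A. f (h a)) = (\<Prod>x\<in>h ` A. if x \<in> k ` B then g x else f x)"
    using assms(3,5) by (auto simp: prod.reindex disjoint_iff intro!: prod.cong)
  moreover have "(\<Prod>b\<in>B. g (k b)) = (\<Prod>x\<in>k ` B. if x \<in> k ` B then g x else f x)"
    using assms(4) by (simp add: prod.reindex)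
  ultimately show ?thesis
    using assms(1,2,5) by (simp add: prod.union_disjoint)
qed

lemma (in prob_space) indep_vars_integral_prod_eq_0:
  fixes X :: "'i \<Rightarrow> 'a \<Rightarrow> real"
  assumes "finite I" "I \<noteq> {}" "indep_vars (\<lambda>_. borel) X I"
    and "\<And>i. i \<in> I \<Longrightarrow> integrable M (X i)" "\<And>i. i \<in> I \<Longrightarrow> expectation (X i) = 0"
  shows "integrable M (\<lambda>\<omega>. \<Prod>i\<in>I. X i \<omega>)" and "expectation (\<lambda>\<omega>. \<Prod>i\<in>I. X i \<omega>) = 0"
  using assms by (simp_all add: indep_vars_integrable indep_vars_lebesgue_integral card_gt_0_iff)

lemma indep_vars_PiM_components:
  assumes "\<And>i. i \<in> I \<Longrightarrow> prob_space (M i)"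
  shows "prob_space.indep_vars (PiM I M) M (\<lambda>i \<omega>. \<omega> i) I"
proof -
  interpret P: prob_space "PiM I M" using assms by (rule prob_space_PiM)
  have rv: "(\<lambda>\<omega>. \<omega> i) \<in> measurable (PiM I M) (M i)" if "i \<in> I" for i
    using that by (rule measurable_component_singleton)
  show ?thesis
  proof (cases "I = {}")
    case True
    then show ?thesis unfolding P.indep_vars_def P.indep_sets_def by simp
  next
    case False
    have "distr (PiM I M) (PiM I M) (\<lambda>\<omega>. \<lambda>i\<in>I. \<omega> i) = distr (PiM I M) (PiM I M) (\<lambda>\<omega>. \<omega>)"
      by (rule distr_cong) (auto simp: space_PiM)
    also have "\<dots> = PiM I (\<lambda>i. distr (PiM I M) (M i) (\<lambda>\<omega>. \<omega> i))"
      by (auto intro!: PiM_cong simp: distr_PiM_component assms)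
    finally show ?thesis
      using False rv by (simp add: P.indep_vars_iff_distr_eq_PiM')
  qed
qed

section \<open>The Gaussian array\<close>

lemma prob_space_gauss_array: "prob_space (gauss_array p n)"
  unfolding gauss_array_def by (intro prob_space_PiM prob_space_normal_density) simp

lemma integral_gauss_array_coordinate_power:
  assumes "t \<in> gauss_idx p n"
  shows "integrable (gauss_array p n) (\<lambda>G. G t ^ k)"
    and "(\<integral>G. G t ^ k \<partial>gauss_array p n) = (\<integral>x. x ^ k \<partial>std_normal_distribution)"
proof -
  have distr_eq: "distr (gauss_array p n) std_normal_distribution (\<lambda>G. G t) = std_normal_distribution"
    unfolding gauss_array_def using assms by (intro distr_PiM_component prob_space_normal_density) simp
  have rv: "(\<lambda>G. G t) \<in> measurable (gauss_array p n) std_normal_distribution"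
    unfolding gauss_array_def using assms by (rule measurable_component_singleton)
  show "integrable (gauss_array p n) (\<lambda>G. G t ^ k)"
    using integrable_std_normal_distribution_moment[of k]
    by (subst (asm) distr_eq[symmetric]) (simp add: integrable_distr_eq[OF rv])
  show "(\<integral>G. G t ^ k \<partial>gauss_array p n) = (\<integral>x. x ^ k \<partial>std_normal_distribution)"
    by (subst distr_eq[symmetric]) (simp add: integral_distr[OF rv])
qed

lemma indep_vars_gauss_array:
  "prob_space.indep_vars (gauss_array p n) (\<lambda>_. borel) (\<lambda>t G. G t) (gauss_idx p n)"
proof -
  interpret prob_space "gauss_array p n" by (rule prob_space_gauss_array)
  have "indep_vars (\<lambda>_. std_normal_distribution) (\<lambda>t G. G t) (gauss_idx p n)"
    unfolding gauss_array_def by (intro indep_vars_PiM_components prob_space_normal_density) simp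
  then have "indep_vars (\<lambda>_. borel) (\<lambda>t G. (\<lambda>x. x) (G t)) (gauss_idx p n)"
    by (rule indep_vars_compose2) (simp add: measurable_ident_sets)
  then show ?thesis
    by simp
qed

lemma integral_gauss_array_coordinate_mult:
  assumes "t \<in> gauss_idx p n" "s \<in> gauss_idx p n"
  shows "integrable (gauss_array p n) (\<lambda>G. G t * G s)"
    and "(\<integral>G. G t * G s \<partial>gauss_array p n) = (if t = s then 1 else 0)"
proof -
  interpret prob_space "gauss_array p n" by (rule prob_space_gauss_array)
  note moment = integral_gauss_array_coordinate_power
  have "integrable (gauss_array p n) (\<lambda>G. G t * G s) \<and> expectation (\<lambda>G. G t * G s) = (if t = s then 1 else 0)"
  proof (cases "t = s")
    case True
    then show ?thesis
      using moment[OF assms(1), of 2] std_normal_distribution_even_moments(1)[of 1]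
      by (simp add: power2_eq_square)
  next
    case False
    have indep: "indep_vars (\<lambda>_. borel) (\<lambda>t G. G t) {t, s}"
      by (rule indep_vars_subset[OF indep_vars_gauss_array]) (use assms in auto)
    have centred: "integrable (gauss_array p n) (\<lambda>G. G j) \<and> expectation (\<lambda>G. G j) = 0" if "j \<in> {t, s}" for j
      using moment[of j p n 1] integral_std_normal_distribution_moment_odd[of 1] that assms by auto
    have prod_eq: "(\<lambda>G. \<Prod>j\<in>{t, s}. G j) = (\<lambda>G. G t * G s)"
      using False by simp
    have "integrable (gauss_array p n) (\<lambda>G. \<Prod>j\<in>{t, s}. G j) \<and>
        expectation (\<lambda>G. \<Prod>j\<in>{t, s}. G j) = 0"
      by (intro conjI indep_vars_integral_prod_eq_0[OF _ _ indep]) (use centred in auto)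
    then show ?thesis
      unfolding prod_eq using False by simp
  qed
  then show "integrable (gauss_array p n) (\<lambda>G. G t * G s)"
    and "(\<integral>G. G t * G s \<partial>gauss_array p n) = (if t = s then 1 else 0)"
    by auto
qed

section \<open>Entries of the Wigner tensor\<close>

lemma permute_list_inject:
  assumes "distinct xs" "\<sigma> permutes {..<length xs}" "\<tau> permutes {..<length xs}"
  shows "permute_list \<sigma> xs = permute_list \<tau> xs \<longleftrightarrow> \<sigma> = \<tau>"
proof
  assume eq: "permute_list \<sigma> xs = permute_list \<tau> xs"
  show "\<sigma> = \<tau>"
  proof
    fix k
    show "\<sigma> k = \<tau> k"
    proof (cases "k < length xs")
      case True
      then have "xs ! \<sigma> k = xs ! \<tau> k"
        using arg_cong[OF eq, of "\<lambda>ys. ys ! k"] assms(2,3) by (simp add: permute_list_nth)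
      moreover have "\<sigma> k < length xs" "\<tau> k < length xs"
        using True permutes_in_image[OF assms(2)] permutes_in_image[OF assms(3)] by auto
      ultimately show ?thesis
        using assms(1) nth_eq_iff_index_eq by blast
    next
      case False
      then show ?thesis
        using permutes_not_in[OF assms(2)] permutes_not_in[OF assms(3)] by simp
    qed
  qed
qed simp

lemma length_sorted_list_of_multiset [simp]: "length (sorted_list_of_multiset S) = size S"
  by (metis mset_sorted_list_of_multiset size_mset)

lemma wig_eq_sum_permute_list:
  assumes "size S = p"
  shows "wig p G S = 1 / sqrt (fact p) *
    (\<Sum>\<sigma> | \<sigma> permutes {..<p}. G (permute_list \<sigma> (sorted_list_of_multiset S)))"
  using assms by (simp add: wig_def permute_list_def)

lemma permute_sorted_list_of_multiset_in_gauss_idx: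
  assumes "size S = p" "set_mset S \<subseteq> {0..<n}" "\<sigma> permutes {..<p}"
  shows "permute_list \<sigma> (sorted_list_of_multiset S) \<in> gauss_idx p n"
    and "mset (permute_list \<sigma> (sorted_list_of_multiset S)) = S"
  using assms by (simp_all add: gauss_idx_def)

lemma integral_wig_eq_0:
  assumes "size S = p" "set_mset S \<subseteq> {0..<n}"
  shows "integrable (gauss_array p n) (\<lambda>G. wig p G S)"
    and "(\<integral>G. wig p G S \<partial>gauss_array p n) = 0"
proof -
  let ?t = "\<lambda>\<sigma>. permute_list \<sigma> (sorted_list_of_multiset S)"
  have centred: "integrable (gauss_array p n) (\<lambda>G. G (?t \<sigma>)) \<and> (\<integral>G. G (?t \<sigma>) \<partial>gauss_array p n) = 0"
    if "\<sigma> permutes {..<p}" for \<sigma>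
    using integral_gauss_array_coordinate_power[of "?t \<sigma>" p n 1]
      integral_std_normal_distribution_moment_odd[of 1]
      permute_sorted_list_of_multiset_in_gauss_idx(1)[OF assms that] by simp
  show "integrable (gauss_array p n) (\<lambda>G. wig p G S)"
    unfolding wig_eq_sum_permute_list[OF assms(1)]
    by (intro integrable_mult_right Bochner_Integration.integrable_sum) (use centred in auto)
  show "(\<integral>G. wig p G S \<partial>gauss_array p n) = 0"
    unfolding wig_eq_sum_permute_list[OF assms(1)] using centred by simp
qed

lemma integral_wig_mset_set_square:
  assumes "A \<subseteq> {0..<n}" "card A = p"
  shows "integrable (gauss_array p n) (\<lambda>G. (wig p G (mset_set A))\<^sup>2)"
    and "(\<integral>G. (wig p G (mset_set A))\<^sup>2 \<partial>gauss_array p n) = 1"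
proof -
  let ?S = "mset_set A" and ?P = "{\<sigma>. \<sigma> permutes {..<p}}"
  let ?t = "\<lambda>\<sigma>. permute_list \<sigma> (sorted_list_of_multiset ?S)"
  have finite: "finite A"
    using assms(1) finite_subset by blast
  have S: "size ?S = p" "set_mset ?S \<subseteq> {0..<n}" "distinct (sorted_list_of_multiset ?S)"
    using assms finite by simp_all
  have square: "(wig p G ?S)\<^sup>2 = 1 / fact p * (\<Sum>\<sigma>\<in>?P. \<Sum>\<tau>\<in>?P. G (?t \<sigma>) * G (?t \<tau>))" for G
    by (simp add: wig_eq_sum_permute_list[OF S(1)] power_mult_distrib power2_eq_square sum_product)
  have cross: "integrable (gauss_array p n) (\<lambda>G. G (?t \<sigma>) * G (?t \<tau>))"
    "(\<integral>G. G (?t \<sigma>) * G (?t \<tau>) \<partial>gauss_array p n) = (if \<sigma> = \<tau> then 1 else 0)"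
    if "\<sigma> \<in> ?P" "\<tau> \<in> ?P" for \<sigma> \<tau>
    using that integral_gauss_array_coordinate_mult
      permute_sorted_list_of_multiset_in_gauss_idx(1)[OF S(1,2)]
      permute_list_inject[OF S(3)] S(1) by simp_all
  show "integrable (gauss_array p n) (\<lambda>G. (wig p G ?S)\<^sup>2)"
    unfolding square by (intro integrable_mult_right Bochner_Integration.integrable_sum cross)
  have "(\<integral>G. (\<Sum>\<sigma>\<in>?P. \<Sum>\<tau>\<in>?P. G (?t \<sigma>) * G (?t \<tau>)) \<partial>gauss_array p n) =
      (\<Sum>\<sigma>\<in>?P. \<integral>G. (\<Sum>\<tau>\<in>?P. G (?t \<sigma>) * G (?t \<tau>)) \<partial>gauss_array p n)"
    by (intro Bochner_Integration.integral_sum Bochner_Integration.integrable_sum cross)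
  also have "\<dots> = (\<Sum>\<sigma>\<in>?P. \<Sum>\<tau>\<in>?P. \<integral>G. G (?t \<sigma>) * G (?t \<tau>) \<partial>gauss_array p n)"
    by (intro sum.cong refl Bochner_Integration.integral_sum cross)
  also have "\<dots> = card ?P"
    using cross(2) finite_permutations[of "{..<p}"] by simp
  finally have "(\<integral>G. (wig p G ?S)\<^sup>2 \<partial>gauss_array p n) = 1 / fact p * card ?P"
    unfolding square by simp
  also have "\<dots> = 1"
    by (simp add: card_permutations)
  finally show "(\<integral>G. (wig p G ?S)\<^sup>2 \<partial>gauss_array p n) = 1" .
qed

lemma integral_wig_mset_set_square_minus_1:
  assumes "A \<subseteq> {0..<n}" "card A = p"
  shows "integrable (gauss_array p n) (\<lambda>G. (wig p G (mset_set A))\<^sup>2 - 1)"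
    and "(\<integral>G. (wig p G (mset_set A))\<^sup>2 - 1 \<partial>gauss_array p n) = 0"
proof -
  interpret prob_space "gauss_array p n"
    by (rule prob_space_gauss_array)
  note square = integral_wig_mset_set_square[OF assms]
  show "integrable (gauss_array p n) (\<lambda>G. (wig p G (mset_set A))\<^sup>2 - 1)"
    using square(1) by simp
  show "(\<integral>G. (wig p G (mset_set A))\<^sup>2 - 1 \<partial>gauss_array p n) = 0"
    using square by (simp add: prob_space)
qed

lemma indep_vars_wig:
  assumes size: "\<And>S. S \<in> \<S> \<Longrightarrow> size S = p" and range: "\<And>S. S \<in> \<S> \<Longrightarrow> set_mset S \<subseteq> {0..<n}"
    and measurable: "\<And>S. S \<in> \<S> \<Longrightarrow> \<phi> S \<in> borel_measurable borel"
  shows "prob_space.indep_vars (gauss_array p n) (\<lambda>_. borel) (\<lambda>S G. \<phi> S (wig p G S)) \<S>"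
proof -
  interpret prob_space "gauss_array p n" by (rule prob_space_gauss_array)
  \<comment> \<open>\<open>W\<^sub>S\<close> only reads the block \<open>K S\<close> of the array, and blocks of distinct \<open>S\<close> are disjoint\<close>
  define K where "K S = {t \<in> gauss_idx p n. mset t = S}" for S
  have tuple_in_K: "permute_list \<sigma> (sorted_list_of_multiset S) \<in> K S" if "S \<in> \<S>" "\<sigma> permutes {..<p}" for S \<sigma>
    using permute_sorted_list_of_multiset_in_gauss_idx[OF size[OF that(1)] range[OF that(1)] that(2)]
    by (simp add: K_def)
  have "indep_vars (\<lambda>S. PiM (K S) (\<lambda>_. borel)) (\<lambda>S G. restrict G (K S)) \<S>"
    using indep_vars_restrict[OF indep_vars_gauss_array, of \<S> K]
    by (auto simp: K_def disjoint_family_on_def)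
  then have "indep_vars (\<lambda>_. borel) (\<lambda>S G. \<phi> S (wig p (restrict G (K S)) S)) \<S>"
  proof (rule indep_vars_compose2)
    fix S assume S: "S \<in> \<S>"
    show "(\<lambda>g. \<phi> S (wig p g S)) \<in> borel_measurable (PiM (K S) (\<lambda>_. borel))"
      unfolding wig_eq_sum_permute_list[OF size[OF S]]
      by (intro measurable_compose[OF _ measurable[OF S]] borel_measurable_times
          borel_measurable_const borel_measurable_sum measurable_component_singleton tuple_in_K S) simp
  qed
  moreover have "wig p (restrict G (K S)) S = wig p G S" if "S \<in> \<S>" for S G
    using tuple_in_K[OF that] by (simp add: wig_eq_sum_permute_list[OF size[OF that]])
  ultimately show ?thesis
    by (simp cong: indep_vars_cong)
qed

lemma integral_prod_wig_eq_0:
  fixes \<phi> :: "nat multiset \<Rightarrow> real \<Rightarrow> real"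
  assumes "finite \<S>" "\<S> \<noteq> {}"
    and "\<And>S. S \<in> \<S> \<Longrightarrow> size S = p" "\<And>S. S \<in> \<S> \<Longrightarrow> set_mset S \<subseteq> {0..<n}"
    and "\<And>S. S \<in> \<S> \<Longrightarrow> \<phi> S \<in> borel_measurable borel"
    and "\<And>S. S \<in> \<S> \<Longrightarrow> integrable (gauss_array p n) (\<lambda>G. \<phi> S (wig p G S))"
    and "\<And>S. S \<in> \<S> \<Longrightarrow> (\<integral>G. \<phi> S (wig p G S) \<partial>gauss_array p n) = 0"
  shows "integrable (gauss_array p n) (\<lambda>G. \<Prod>S\<in>\<S>. \<phi> S (wig p G S))"
    and "(\<integral>G. (\<Prod>S\<in>\<S>. \<phi> S (wig p G S)) \<partial>gauss_array p n) = 0"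
proof -
  interpret prob_space "gauss_array p n"
    by (rule prob_space_gauss_array)
  have indep: "indep_vars (\<lambda>_. borel) (\<lambda>S G. \<phi> S (wig p G S)) \<S>"
    using assms(3-5) by (rule indep_vars_wig)
  show "integrable (gauss_array p n) (\<lambda>G. \<Prod>S\<in>\<S>. \<phi> S (wig p G S))"
    by (rule indep_vars_integral_prod_eq_0(1)[OF assms(1,2) indep]) (use assms(6,7) in auto)
  show "(\<integral>G. (\<Prod>S\<in>\<S>. \<phi> S (wig p G S)) \<partial>gauss_array p n) = 0"
    by (rule indep_vars_integral_prod_eq_0(2)[OF assms(1,2) indep]) (use assms(6,7) in auto)
qed

section \<open>Labellings and Frobenius pairs\<close>

lemma mem_labels_at:
  "finite E \<Longrightarrow> x \<in># labels_at E ends i v \<longleftrightarrow> (\<exists>e\<in>E. v \<in># ends e \<and> x = i e)"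
  by (auto simp: labels_at_def set_mset_sum split: if_splits)

lemma size_labels_at: "size (labels_at E ends i v) = deg E ends v"
  by (simp add: labels_at_def deg_def)

lemma size_2_mset_eq:
  assumes "size M = 2" "u \<in># M" "w \<in># M" "u \<noteq> w"
  shows "M = {#u, w#}"
proof -
  obtain M' where M': "M = add_mset u M'" "w \<in># M'"
    using assms(2,3,4) by (metis insert_noteq_member multi_member_split)
  then obtain M'' where "M' = add_mset w M''"
    by (metis multi_member_split)
  then show ?thesis
    using assms(1) M' by simp
qed

lemma frob_pair_sym: "frob_pair p V E ends u w \<Longrightarrow> frob_pair p V E ends w u"
  unfolding frob_pair_def by (auto simp: add_mset_commute)

lemma frob_pair_unique:
  assumes "p \<ge> 1" "frob_pair p V E ends u w" "frob_pair p V E ends u w'"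
  shows "w = w'"
proof -
  have "{e\<in>E. ends e = {#u, w#}} \<noteq> {}"
    using assms(1,2) by (metis card.empty frob_pair_def not_one_le_zero)
  then obtain e where "e \<in> E" "ends e = {#u, w#}"
    by blast
  then show ?thesis
    using assms(3) by (auto simp: frob_pair_def)
qed

lemma frob_vertices_iff: "v \<in> frob_vertices p V E ends \<longleftrightarrow> (\<exists>w. frob_pair p V E ends v w)"
  unfolding frob_vertices_def frob_pairs_def by (auto intro: frob_pair_sym)

lemma frob_pairsE:
  assumes "P \<in> frob_pairs p V E ends" "u \<in> P"
  obtains w where "frob_pair p V E ends u w" "P = {u, w}"
  using assms by (auto simp: frob_pairs_def intro: frob_pair_sym)

lemma frob_pairs_eqI:
  assumes "p \<ge> 1" "P \<in> frob_pairs p V E ends" "Q \<in> frob_pairs p V E ends" "u \<in> P" "u \<in> Q"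
  shows "P = Q"
  using assms frob_pair_unique[OF assms(1)] by (metis frob_pairsE)

lemma labels_at_frob_pair:
  assumes "frob_pair p V E ends u w" "finite E" "inj_on i E"
  shows "labels_at E ends i u = mset_set (i ` {e\<in>E. ends e = {#u, w#}})"
proof -
  have "labels_at E ends i u = (\<Sum>e | e \<in> E \<and> ends e = {#u, w#}. {#i e#})"
    unfolding labels_at_def using assms(1,2)
    by (intro sum.mono_neutral_cong_right) (auto simp: frob_pair_def not_in_iff)
  also have "\<dots> = mset_set (i ` {e\<in>E. ends e = {#u, w#}})"
    using assms(3) by (subst sum_multiset_singleton[symmetric], subst sum.reindex) (auto intro: inj_on_subset)
  finally show ?thesis .
qed

lemma labels_pair_frob_pair:
  assumes "frob_pair p V E ends u w" "inj_on i E"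
  shows "labels_pair E ends i {u, w} = mset_set (i ` {e\<in>E. ends e = {#u, w#}})"
  using assms by (auto simp: labels_pair_def frob_pair_def image_mset_mset_set inj_on_subset)

context
  fixes p :: nat and V :: "'v set" and E :: "'e set" and ends :: "'e \<Rightarrow> 'v multiset"
    and i :: "'e \<Rightarrow> nat"
  assumes multigraph: "multigraph V E ends" and regular: "regular p V E ends"
    and inj: "inj_on i E"
begin

lemma labels_at_eq_imp_frob_pair:
  assumes "u \<in> V" "w \<in> V" "u \<noteq> w" "labels_at E ends i u = labels_at E ends i w"
  shows "frob_pair p V E ends u w"
proof -
  have finite: "finite E"
    using multigraph by (simp add: multigraph_def)
  \<comment> \<open>the label of an edge at \<open>x\<close> also occurs at \<open>y\<close>, by injectivity of \<open>i\<close> on the same edge\<close>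
  have edge_joins: "ends e = {#x, y#}"
    if "x \<noteq> y" and same: "labels_at E ends i x = labels_at E ends i y"
      and e: "e \<in> E" "x \<in># ends e" for x y e
  proof -
    have "i e \<in># labels_at E ends i x"
      using e finite by (auto simp: mem_labels_at)
    then obtain e' where e': "e' \<in> E" "y \<in># ends e'" "i e = i e'"
      using same finite by (auto simp: mem_labels_at)
    then have "e' = e"
      using inj e(1) by (metis inj_onD)
    moreover have "size (ends e) = 2"
      using multigraph e(1) by (simp add: multigraph_def)
    ultimately show ?thesis
      using size_2_mset_eq[of "ends e" x y] e(2) e'(2) \<open>x \<noteq> y\<close> by simp
  qed
  have joins: "ends e = {#u, w#}" if "e \<in> E" "u \<in># ends e \<or> w \<in># ends e" for e
    using that edge_joins[of u w e] edge_joins[of w u e] assms(3,4) by (metis add_mset_commute)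
  have "deg E ends u = (\<Sum>e\<in>E. if ends e = {#u, w#} then 1 else 0)"
    unfolding deg_def using assms(3) by (intro sum.cong) (auto dest: joins simp: not_in_iff)
  also have "\<dots> = card {e\<in>E. ends e = {#u, w#}}"
    using finite by (simp add: sum.If_cases Int_def conj_commute)
  finally have "card {e\<in>E. ends e = {#u, w#}} = p"
    using regular assms(1) by (simp add: regular_def)
  then show ?thesis
    using joins assms(1-3) by (auto simp: frob_pair_def)
qed

lemma labels_pair_eq_labels_at:
  assumes "P \<in> frob_pairs p V E ends" "u \<in> P"
  shows "labels_pair E ends i P = labels_at E ends i u"
proof -
  obtain w where uw: "frob_pair p V E ends u w" "P = {u, w}"
    using assms by (rule frob_pairsE)
  have "finite E"
    using multigraph by (simp add: multigraph_def)
  then show ?thesis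
    using labels_pair_frob_pair[OF uw(1) inj] labels_at_frob_pair[OF uw(1) _ inj] uw(2) by simp
qed

lemma inj_on_labels_at: "inj_on (labels_at E ends i) (V - frob_vertices p V E ends)"
proof (rule inj_onI, rule ccontr)
  fix v w
  assume "v \<in> V - frob_vertices p V E ends" "w \<in> V - frob_vertices p V E ends" "v \<noteq> w"
    and "labels_at E ends i v = labels_at E ends i w"
  then show False
    using labels_at_eq_imp_frob_pair[of v w] by (auto simp: frob_vertices_iff)
qed

lemma inj_on_labels_pair:
  assumes p: "p \<ge> 1"
  shows "inj_on (labels_pair E ends i) (frob_pairs p V E ends)"
proof (rule inj_onI)
  fix P Q
  assume P: "P \<in> frob_pairs p V E ends" and Q: "Q \<in> frob_pairs p V E ends"
    and same: "labels_pair E ends i P = labels_pair E ends i Q"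
  obtain u w where u: "frob_pair p V E ends u w" "P = {u, w}"
    using P by (auto simp: frob_pairs_def)
  obtain u' w' where u': "frob_pair p V E ends u' w'" "Q = {u', w'}"
    using Q by (auto simp: frob_pairs_def)
  have "labels_at E ends i u = labels_at E ends i u'"
    using same labels_pair_eq_labels_at[OF P, of u] labels_pair_eq_labels_at[OF Q, of u'] u(2) u'(2)
    by simp
  show "P = Q"
  proof (cases "u = u'")
    case True
    then show ?thesis
      using frob_pairs_eqI[OF p P Q] u(2) u'(2) True by blast
  next
    case False
    then have "frob_pair p V E ends u u'"
      using labels_at_eq_imp_frob_pair \<open>labels_at E ends i u = labels_at E ends i u'\<close> u(1) u'(1)
      by (simp add: frob_pair_def)
    then have uu': "{u, u'} \<in> frob_pairs p V E ends"
      by (auto simp: frob_pairs_def)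
    show ?thesis
      using frob_pairs_eqI[OF p P uu', of u] frob_pairs_eqI[OF p Q uu', of u'] u(2) u'(2) by simp
  qed
qed

lemma labels_at_labels_pair_disjoint:
  "labels_at E ends i ` (V - frob_vertices p V E ends) \<inter> labels_pair E ends i ` frob_pairs p V E ends = {}"
proof -
  have False if v: "v \<in> V" "v \<notin> frob_vertices p V E ends" and P: "P \<in> frob_pairs p V E ends"
    and same: "labels_at E ends i v = labels_pair E ends i P" for v P
  proof -
    obtain u w where u: "frob_pair p V E ends u w" "P = {u, w}"
      using P by (auto simp: frob_pairs_def)
    have "u \<in> frob_vertices p V E ends"
      unfolding frob_vertices_iff using u(1) by blast
    have "u \<in> V"
      using u(1) by (simp add: frob_pair_def)
    have "v \<noteq> u"
      using v(2) \<open>u \<in> frob_vertices p V E ends\<close> by blast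
    moreover have "labels_at E ends i v = labels_at E ends i u"
      using same labels_pair_eq_labels_at[OF P, of u] u(2) by simp
    ultimately have "frob_pair p V E ends v u"
      using labels_at_eq_imp_frob_pair v(1) \<open>u \<in> V\<close> by blast
    then show False
      using v(2) by (auto simp: frob_vertices_iff)
  qed
  then show ?thesis
    by blast
qed

lemma integral_labelling_term_eq_0:
  assumes "p \<ge> 1" "V \<noteq> {}" "i \<in> E \<rightarrow>\<^sub>E {0..<n}"
  shows "integrable (gauss_array p n) (\<lambda>G.
      (\<Prod>v\<in>V - frob_vertices p V E ends. wig p G (labels_at E ends i v)) *
      (\<Prod>P\<in>frob_pairs p V E ends. (wig p G (labels_pair E ends i P))\<^sup>2 - 1))"
    and "(\<integral>G. (\<Prod>v\<in>V - frob_vertices p V E ends. wig p G (labels_at E ends i v)) *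
      (\<Prod>P\<in>frob_pairs p V E ends. (wig p G (labels_pair E ends i P))\<^sup>2 - 1) \<partial>gauss_array p n) = 0"
proof -
  let ?U = "frob_vertices p V E ends" and ?F = "frob_pairs p V E ends"
  let ?Sv = "labels_at E ends i" and ?Sp = "labels_pair E ends i"
  define \<S>v where "\<S>v = ?Sv ` (V - ?U)"
  define \<S>p where "\<S>p = ?Sp ` ?F"
  define \<phi> where "\<phi> S x = (if S \<in> \<S>p then x\<^sup>2 - 1 else x)" for S and x :: real
  have finite: "finite V" "finite E"
    using multigraph by (simp_all add: multigraph_def)
  have "?F \<subseteq> Pow V"
    by (auto simp: frob_pairs_def frob_pair_def)
  then have finite_F: "finite ?F"
    using finite(1) finite_subset by blast
  have nonempty: "\<S>v \<union> \<S>p \<noteq> {}"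
    using assms(2) by (auto simp: \<S>v_def \<S>p_def frob_vertices_def)
  have "\<S>p \<subseteq> ?Sv ` V"
  proof
    fix S assume "S \<in> \<S>p"
    then obtain u w where uw: "frob_pair p V E ends u w" "S = ?Sp {u, w}"
      by (auto simp: \<S>p_def frob_pairs_def)
    then have "{u, w} \<in> ?F" "u \<in> V"
      by (auto simp: frob_pairs_def frob_pair_def)
    then show "S \<in> ?Sv ` V"
      using labels_pair_eq_labels_at[of "{u, w}" u] uw(2) by simp
  qed
  then have vertex_labels: "S \<in> ?Sv ` V" if "S \<in> \<S>v \<union> \<S>p" for S
    using that by (auto simp: \<S>v_def)
  have size: "size S = p" and range: "set_mset S \<subseteq> {0..<n}" if S: "S \<in> \<S>v \<union> \<S>p" for S
  proof -
    obtain v where v: "v \<in> V" "S = ?Sv v"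
      using vertex_labels[OF S] by blast
    then show "size S = p"
      using regular by (simp add: size_labels_at regular_def)
    show "set_mset S \<subseteq> {0..<n}"
      using v(2) assms(3) finite(2) by (auto simp: mem_labels_at PiE_iff)
  qed
  have centred: "integrable (gauss_array p n) (\<lambda>G. \<phi> S (wig p G S)) \<and>
      (\<integral>G. \<phi> S (wig p G S) \<partial>gauss_array p n) = 0" if "S \<in> \<S>v \<union> \<S>p" for S
  proof (cases "S \<in> \<S>p")
    case True
    then obtain u w where uw: "frob_pair p V E ends u w" "S = ?Sp {u, w}"
      by (auto simp: \<S>p_def frob_pairs_def)
    let ?A = "i ` {e\<in>E. ends e = {#u, w#}}"
    have "?A \<subseteq> {0..<n}" "card ?A = p"
      using assms(3) uw(1) inj by (auto simp: card_image inj_on_subset frob_pair_def)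
    then show ?thesis
      using integral_wig_mset_set_square_minus_1 labels_pair_frob_pair[OF uw(1) inj] uw(2) True
      by (simp add: \<phi>_def)
  next
    case False
    then show ?thesis
      using integral_wig_eq_0 size[OF that] range[OF that] by (simp add: \<phi>_def)
  qed
  have "finite (\<S>v \<union> \<S>p)"
    using finite(1) finite_F by (simp add: \<S>v_def \<S>p_def)
  moreover have "\<phi> S \<in> borel_measurable borel" for S
    by (cases "S \<in> \<S>p") (simp_all add: \<phi>_def[abs_def])
  ultimately have "integrable (gauss_array p n) (\<lambda>G. \<Prod>S\<in>\<S>v \<union> \<S>p. \<phi> S (wig p G S))"
    and "(\<integral>G. (\<Prod>S\<in>\<S>v \<union> \<S>p. \<phi> S (wig p G S)) \<partial>gauss_array p n) = 0"
    using integral_prod_wig_eq_0[OF _ nonempty size range _ centred[THEN conjunct1]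
        centred[THEN conjunct2]] by auto
  moreover have "(\<Prod>v\<in>V - ?U. wig p G (?Sv v)) * (\<Prod>P\<in>?F. (wig p G (?Sp P))\<^sup>2 - 1) =
      (\<Prod>S\<in>\<S>v \<union> \<S>p. \<phi> S (wig p G S))" for G
    using prod_image_Un_image[OF finite_Diff[OF finite(1)] finite_F inj_on_labels_at
        inj_on_labels_pair[OF assms(1)] labels_at_labels_pair_disjoint, where f = "wig p G" and g = "\<lambda>S. (wig p G S)\<^sup>2 - 1"]
    by (simp add: \<S>v_def \<S>p_def \<phi>_def)
  ultimately show "integrable (gauss_array p n) (\<lambda>G.
      (\<Prod>v\<in>V - ?U. wig p G (?Sv v)) * (\<Prod>P\<in>?F. (wig p G (?Sp P))\<^sup>2 - 1))"
    and "(\<integral>G. (\<Prod>v\<in>V - ?U. wig p G (?Sv v)) * (\<Prod>P\<in>?F. (wig p G (?Sp P))\<^sup>2 - 1)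
      \<partial>gauss_array p n) = 0"
    by simp_all
qed

end

theorem proposition4p5:
  fixes p n :: nat and V :: "'v set" and E :: "'e set" and ends :: "'e \<Rightarrow> 'v multiset"
  assumes "p \<ge> 1"
    and "multigraph V E ends"
    and "V \<noteq> {}"
    and "regular p V E ends"
  shows "integrable (gauss_array p n) (\<lambda>G. mc p n V E ends (wig p G))
    \<and> (\<integral>G. mc p n V E ends (wig p G) \<partial>gauss_array p n) = 0"
proof -
  let ?L = "{i \<in> E \<rightarrow>\<^sub>E {0..<n}. inj_on i E}"
  let ?term = "\<lambda>i G. (\<Prod>v\<in>V - frob_vertices p V E ends. wig p G (labels_at E ends i v)) *
    (\<Prod>P\<in>frob_pairs p V E ends. (wig p G (labels_pair E ends i P))\<^sup>2 - 1)"
  have mc_eq: "(\<lambda>G. mc p n V E ends (wig p G)) = (\<lambda>G. \<Sum>i\<in>?L. ?term i G)"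
    by (simp add: mc_def)
  have term_integrable: "integrable (gauss_array p n) (?term i)"
    and term_integral: "(\<integral>G. ?term i G \<partial>gauss_array p n) = 0" if "i \<in> ?L" for i
    using integral_labelling_term_eq_0[OF assms(2,4) _ assms(1,3)] that by auto
  have "(\<integral>G. (\<Sum>i\<in>?L. ?term i G) \<partial>gauss_array p n) = (\<Sum>i\<in>?L. \<integral>G. ?term i G \<partial>gauss_array p n)"
    by (intro Bochner_Integration.integral_sum term_integrable)
  also have "\<dots> = 0"
    by (intro sum.neutral ballI term_integral)
  finally show ?thesis
    unfolding mc_eq by (auto intro: term_integrable)
qed

end
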